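(* Let $\rho_{Q^n}$ be an arbitrary normalized state on $Q^{\otimes n}$. Suppose the $i$th subsystem is measured with a two-outcome POVM $\{P(i),I-P(i)\}$, and let $\boldsymbol N_P$ be the number of first outcomes; similarly, with POVMs $\{P'(i),I-P'(i)\}$, let $\boldsymbol N_{P'}$ be the number of first outcomes. Suppose for every $i$ there is $0\le\tilde P(i)\le I$ with $P(i)\le\tilde P(i)$, $P'(i)\le\tilde P(i)$ and $\|\tilde P(i)-P(i)\|_\infty\le\delta$. Then $$\Pr\Big(\frac{\boldsymbol N_{P'}}{n}\ge e+\delta+c\Big)\le\Pr\Big(\frac{\boldsymbol N_P}{n}\ge e\Big)+\sum_{i=n(\delta+c)}^{n}\binom ni\delta^i(1-\delta)^{n-i}$$ (sum over integers $i$ with $n(\delta+c)\le i\le n$). *)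

theory Defs
  imports Complex_Main
begin

text \<open>A system with orthonormal basis
indexed by a finite type 'a has operators represented by their matrices
'a \<Rightarrow> 'a \<Rightarrow> complex.  The n-fold tensor power Q^{\<otimes>n} of a system Q with
basis index 'd is the system with basis index 'n \<Rightarrow> 'd, where 'n is a finite
type with CARD('n) = n (the subsystems).\<close>

type_synonym 'a qop = "'a \<Rightarrow> 'a \<Rightarrow> complex"

definition app :: "('a::finite) qop \<Rightarrow> ('a \<Rightarrow> complex) \<Rightarrow> ('a \<Rightarrow> complex)" where
  "app A v = (\<lambda>i. \<Sum>j\<in>UNIV. A i j * v j)"

definition cinner :: "('a::finite \<Rightarrow> complex) \<Rightarrow> ('a \<Rightarrow> complex) \<Rightarrow> complex" where
  "cinner v w = (\<Sum>i\<in>UNIV. cnj (v i) * w i)"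

definition vnorm :: "('a::finite \<Rightarrow> complex) \<Rightarrow> real" where
  "vnorm v = sqrt (\<Sum>i\<in>UNIV. (cmod (v i))^2)"

definition psd :: "('a::finite) qop \<Rightarrow> bool" where
  "psd A \<longleftrightarrow> (\<forall>v. Im (cinner v (app A v)) = 0 \<and> Re (cinner v (app A v)) \<ge> 0)"

definition op_minus :: "'a qop \<Rightarrow> 'a qop \<Rightarrow> 'a qop" where
  "op_minus A B = (\<lambda>i j. A i j - B i j)"

definition idop :: "'a qop" where
  "idop = (\<lambda>i j. if i = j then 1 else 0)"

definition zeroop :: "'a qop" where
  "zeroop = (\<lambda>i j. 0)"

definition op_le :: "('a::finite) qop \<Rightarrow> 'a qop \<Rightarrow> bool" where
  "op_le A B \<longleftrightarrow> psd (op_minus B A)"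

definition trace :: "('a::finite) qop \<Rightarrow> complex" where
  "trace A = (\<Sum>i\<in>UNIV. A i i)"

definition op_mult :: "('a::finite) qop \<Rightarrow> 'a qop \<Rightarrow> 'a qop" where
  "op_mult A B = (\<lambda>i k. \<Sum>j\<in>UNIV. A i j * B j k)"

definition op_norm :: "('a::finite) qop \<Rightarrow> real" where
  "op_norm A = Sup {vnorm (app A v) | v. vnorm v = 1}"

definition is_state :: "('a::finite) qop \<Rightarrow> bool" where
  "is_state \<rho> \<longleftrightarrow> psd \<rho> \<and> trace \<rho> = 1"

definition tensor :: "('n::finite \<Rightarrow> ('d::finite) qop) \<Rightarrow> ('n \<Rightarrow> 'd) qop" where
  "tensor A = (\<lambda>f g. \<Prod>i\<in>UNIV. A i (f i) (g i))"

text \<open>Subsystem i measured with the two-outcome POVM {P i, I - P i}; the outcome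
string x has x i = True iff the first outcome (P i) occurred at site i.
Born rule probability of the outcome string x.\<close>
definition outcome_prob ::
  "(('n::finite \<Rightarrow> 'd::finite) qop) \<Rightarrow> ('n \<Rightarrow> 'd qop) \<Rightarrow> ('n \<Rightarrow> bool) \<Rightarrow> real" where
  "outcome_prob \<rho> P x =
     Re (trace (op_mult \<rho> (tensor (\<lambda>i. if x i then P i else op_minus idop (P i)))))"

definition prob_frac_ge ::
  "(('n::finite \<Rightarrow> 'd::finite) qop) \<Rightarrow> ('n \<Rightarrow> 'd qop) \<Rightarrow> real \<Rightarrow> real" where
  "prob_frac_ge \<rho> P t =
     (\<Sum>x\<in>{x::'n \<Rightarrow> bool. real (card {i. x i}) / real (card (UNIV :: 'n set)) \<ge> t}. outcome_prob \<rho> P x)"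

end

theory Submission
  imports Defs "HOL-Analysis.L2_Norm" "HOL-Library.FuncSet"
begin

(*
  Refine the measurements into three-outcome POVMs and coarse-grain them again. The counting
  probabilities Pr(#{i. y_i \<in> S} \<ge> tn) of a product measurement are nonnegative combinations of
  the numbers Re tr(\<rho> (F_1 \<otimes> ... \<otimes> F_n)) with all F_i positive semidefinite, and these are
  nonnegative (Gram decomposition of the F_i). Hence Pr is monotone in S, subadditive under
  splitting S into disjoint parts, and invariant under lumping outcomes together.

  Refining P'(i) \<le> P~(i) by {P', P~ - P', I - P~} gives Pr(N_P' \<ge> tn) \<le> Pr(N_P~ \<ge> tn); refining
  P~ = P + Q, Q = P~ - P, by {P, Q, I - P~} gives Pr(N_P~ \<ge> (e + \<delta> + c)n) \<le> Pr(N_P \<ge> en) +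
  Pr(N_Q \<ge> (\<delta> + c)n); and 0 \<le> Q \<le> \<delta>I gives Pr(N_Q \<ge> (\<delta> + c)n) \<le> Pr(N_\<delta>I \<ge> (\<delta> + c)n),
  which is the binomial tail for every normalized state.
*)

section \<open>Positive semidefinite matrices\<close>

definition scaled_idop :: "real \<Rightarrow> 'a qop" where
  "scaled_idop r = (\<lambda>a b. of_real r * idop a b)"

lemma op_le_zeroop_iff_psd: "op_le zeroop A \<longleftrightarrow> psd A"
  by (simp add: op_le_def op_minus_def zeroop_def)

lemma cinner_app: "cinner v (app A v) = (\<Sum>a\<in>UNIV. \<Sum>b\<in>UNIV. cnj (v a) * A a b * v b)"
  by (simp add: cinner_def app_def sum_distrib_left mult.assoc)

lemma cinner_app_op_minus:
  "cinner v (app (op_minus A B) v) = cinner v (app A v) - cinner v (app B v)"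
  unfolding cinner_app op_minus_def by (simp add: right_diff_distrib left_diff_distrib sum_subtractf)

lemma cinner_app_scaled_idop:
  "cinner v (app (scaled_idop r) v) = of_real (r * (\<Sum>a\<in>UNIV. (cmod (v a))\<^sup>2))"
proof -
  have "(\<Sum>b\<in>UNIV. cnj (v a) * scaled_idop r a b * v b)
      = (\<Sum>b\<in>UNIV. if b = a then of_real r * (v a * cnj (v a)) else 0)" for a
    by (intro sum.cong) (auto simp: scaled_idop_def idop_def)
  then show ?thesis
    unfolding cinner_app by (simp add: complex_norm_square sum_distrib_left del: of_real_power)
qed

lemma psd_scaled_idop: "0 \<le> r \<Longrightarrow> psd (scaled_idop r)"
  unfolding psd_def cinner_app_scaled_idop by (simp add: sum_nonneg)

lemma cinner_app_single:
  "cinner (\<lambda>x. if x = a then s else 0) (app A (\<lambda>x. if x = a then s else 0)) = cnj s * s * A a a"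
proof -
  let ?v = "\<lambda>x. if x = a then s else 0"
  have row: "(\<lambda>y. A x y * ?v y) = (\<lambda>y. if y = a then A x a * s else 0)" for x
    by (auto simp: fun_eq_iff)
  have app_v: "app A ?v = (\<lambda>x. A x a * s)"
    unfolding app_def row by simp
  have col: "(\<lambda>x. cnj (?v x) * w x) = (\<lambda>x. if x = a then cnj s * w a else 0)" for w
    by (auto simp: fun_eq_iff)
  show ?thesis
    unfolding app_v cinner_def col by (simp add: mult_ac)
qed

lemma cinner_app_pair:
  fixes A :: "'a::finite qop" and s t :: complex
  assumes "a \<noteq> b"
  defines "v \<equiv> \<lambda>x. (if x = a then s else 0) + (if x = b then t else 0)"
  shows "cinner v (app A v) = cnj s * s * A a a + cnj s * t * A a b + cnj t * s * A b a + cnj t * t * A b b"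
proof -
  have row: "(\<lambda>y. A x y * v y) = (\<lambda>y. (if y = a then A x a * s else 0) + (if y = b then A x b * t else 0))" for x
    using assms(1) by (auto simp: v_def fun_eq_iff)
  have app_v: "app A v = (\<lambda>x. A x a * s + A x b * t)"
    unfolding app_def row by (simp add: sum.distrib)
  have col: "(\<lambda>x. cnj (v x) * w x) = (\<lambda>x. (if x = a then cnj s * w a else 0) + (if x = b then cnj t * w b else 0))" for w
    using assms(1) by (auto simp: v_def fun_eq_iff)
  have "cinner v w = cnj s * w a + cnj t * w b" for w
    unfolding cinner_def col by (simp add: sum.distrib)
  then show ?thesis
    unfolding app_v by (simp add: distrib_left mult_ac)
qed

lemma psd_diagonal:
  assumes "psd A" shows "Im (A a a) = 0" and "0 \<le> Re (A a a)"
  using assms cinner_app_single[of a 1 A] unfolding psd_def by (metis mult_1 complex_cnj_one)+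

lemma psd_hermitian:
  assumes "psd A" shows "A b a = cnj (A a b)"
proof (cases "a = b")
  case True
  then show ?thesis using psd_diagonal[OF assms, of a] by (simp add: complex_eq_iff)
next
  case False
  have Im_form: "Im (cinner v (app A v)) = 0" for v
    using assms unfolding psd_def by blast
  have "Im (A a a) + Im (A a b) + Im (A b a) + Im (A b b) = 0"
    using cinner_app_pair[OF False, of 1 1 A]
      Im_form[of "\<lambda>x. (if x = a then 1 else 0) + (if x = b then 1 else 0)"] by simp
  moreover have "Im (A a a) + Re (A a b) - Re (A b a) + Im (A b b) = 0"
    using cinner_app_pair[OF False, of 1 \<i> A]
      Im_form[of "\<lambda>x. (if x = a then 1 else 0) + (if x = b then \<i> else 0)"] by simp
  ultimately show ?thesis
    using psd_diagonal(1)[OF assms] by (simp add: complex_eq_iff)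
qed

lemma psd_zero_diagonal_imp_zero_row:
  assumes "psd A" "A x x = 0"
  shows "A x b = 0"
proof (rule ccontr)
  assume nz: "A x b \<noteq> 0"
  then have "x \<noteq> b" using assms(2) by auto
  \<comment> \<open>Otherwise the form of A at s e_x + e_b, with s a large negative multiple of A x b, is negative.\<close>
  define r :: real where "r = (Re (A b b) + 1) / (2 * (cmod (A x b))\<^sup>2)"
  define s where "s = - of_real r * A x b"
  have "A x b * cnj (A x b) = of_real ((cmod (A x b))\<^sup>2)"
    by (rule complex_norm_square[symmetric])
  then have cross_terms: "cnj s * A x b = - of_real (r * (cmod (A x b))\<^sup>2)"
      "s * A b x = - of_real (r * (cmod (A x b))\<^sup>2)"
    unfolding s_def psd_hermitian[OF assms(1), of x b] by (simp_all add: mult_ac)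
  have "0 \<le> Re (cinner (\<lambda>y. (if y = x then s else 0) + (if y = b then 1 else 0))
                  (app A (\<lambda>y. (if y = x then s else 0) + (if y = b then 1 else 0))))"
    using assms(1) unfolding psd_def by blast
  then have "0 \<le> Re (cnj s * A x b) + Re (s * A b x) + Re (A b b)"
    unfolding cinner_app_pair[OF \<open>x \<noteq> b\<close>] using assms(2) by simp
  moreover have "r * (cmod (A x b))\<^sup>2 = (Re (A b b) + 1) / 2"
    using nz unfolding r_def by simp
  ultimately show False
    unfolding cross_terms by simp
qed

lemma psd_schur_complement:
  assumes "psd A" "A x x \<noteq> 0"
  shows "psd (\<lambda>a b. A a b - A a x * A x b / A x x)"
  unfolding psd_def
proof
  fix v
  let ?A' = "\<lambda>a b. A a b - A a x * A x b / A x x"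
  \<comment> \<open>Row and column x of A' vanish, so the x-coordinate of v is free; choosing it to put v' in the
     kernel of row x of A kills the correction term, and the form of A' at v becomes that of A at v'.\<close>
  define v' where "v' = v(x := - (\<Sum>b\<in>UNIV - {x}. A x b * v b) / A x x)"
  have "(\<Sum>b\<in>UNIV. A x b * v' b) = A x x * v' x + (\<Sum>b\<in>UNIV - {x}. A x b * v' b)"
    by (simp add: sum.remove)
  also have "(\<Sum>b\<in>UNIV - {x}. A x b * v' b) = (\<Sum>b\<in>UNIV - {x}. A x b * v b)"
    unfolding v'_def by (intro sum.cong) auto
  finally have v'_kernel: "(\<Sum>b\<in>UNIV. A x b * v' b) = 0"
    using assms(2) unfolding v'_def by simp
  have same_terms: "cnj (v a) * ?A' a b * v b = cnj (v' a) * ?A' a b * v' b" for a b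
    using assms(2) by (cases "a = x"; cases "b = x") (auto simp: v'_def)
  have "cinner v (app ?A' v) = cinner v' (app ?A' v')"
    unfolding cinner_app by (intro sum.cong refl same_terms)
  also have "\<dots> = cinner v' (app A v')
      - (\<Sum>a\<in>UNIV. \<Sum>b\<in>UNIV. (cnj (v' a) * A a x / A x x) * (A x b * v' b))"
    unfolding cinner_app
    by (simp add: right_diff_distrib left_diff_distrib sum_subtractf mult_ac)
  also have "\<dots> = cinner v' (app A v')"
    unfolding sum_distrib_left[symmetric] v'_kernel by simp
  finally have form_eq: "cinner v (app ?A' v) = cinner v' (app A v')" .
  have "Im (cinner v' (app A v')) = 0 \<and> 0 \<le> Re (cinner v' (app A v'))"
    using assms(1) unfolding psd_def by blast
  then show "Im (cinner v (app ?A' v)) = 0 \<and> 0 \<le> Re (cinner v (app ?A' v))"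
    unfolding form_eq .
qed

lemma psd_schur_term_rank_one:
  assumes "psd A" "A x x \<noteq> 0"
  obtains u where "\<And>a b. A a x * A x b / A x x = u a * cnj (u b)"
proof
  define \<alpha> where "\<alpha> = Re (A x x)"
  have "A x x = of_real \<alpha>" "0 \<le> \<alpha>"
    using psd_diagonal[OF assms(1), of x] unfolding \<alpha>_def by (simp_all add: complex_eq_iff)
  then have "of_real (sqrt \<alpha>) * of_real (sqrt \<alpha>) = A x x"
    by (simp flip: of_real_mult)
  then show "A a x * A x b / A x x = A a x / of_real (sqrt \<alpha>) * cnj (A b x / of_real (sqrt \<alpha>))" for a b
    using psd_hermitian[OF assms(1), of b x] by (simp add: mult_ac)
qed

lemma psd_gram_decomposition_on:
  assumes "finite S" "psd A" "\<And>a b. a \<notin> S \<or> b \<notin> S \<Longrightarrow> A a b = 0"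
  shows "\<exists>(k::nat) w. \<forall>a b. A a b = (\<Sum>j<k. w j a * cnj (w j b))"
  using assms
proof (induction S arbitrary: A rule: finite_induct)
  case empty
  then show ?case by (intro exI[of _ 0]) simp
next
  case (insert x S)
  show ?case
  proof (cases "A x x = 0")
    case True
    have row: "A x c = 0" for c
      using psd_zero_diagonal_imp_zero_row[OF insert.prems(1) True] .
    have column: "A c x = 0" for c
      using psd_hermitian[OF insert.prems(1), of x c] row[of c] by simp
    have "A a b = 0" if "a \<notin> S \<or> b \<notin> S" for a b
    proof (cases "a = x \<or> b = x")
      case True
      then show ?thesis using row column by auto
    next
      case False
      then show ?thesis using that insert.prems(2) by blast
    qed
    then show ?thesis by (rule insert.IH[OF insert.prems(1)])
  next
    case False
    have schur_support: "A a b - A a x * A x b / A x x = 0" if "a \<notin> S \<or> b \<notin> S" for a b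
    proof (cases "a = x \<or> b = x")
      case True
      then show ?thesis using False by auto
    next
      case False
      then show ?thesis using that insert.prems(2) by auto
    qed
    have "\<exists>(k::nat) w. \<forall>a b. A a b - A a x * A x b / A x x = (\<Sum>j<k. w j a * cnj (w j b))"
      by (rule insert.IH[OF psd_schur_complement[OF insert.prems(1) False] schur_support])
    then obtain k :: nat and w where w: "\<forall>a b. A a b - A a x * A x b / A x x = (\<Sum>j<k. w j a * cnj (w j b))"
      by blast
    obtain u where u: "\<And>a b. A a x * A x b / A x x = u a * cnj (u b)"
      using psd_schur_term_rank_one[OF insert.prems(1) False] by blast
    have "A a b = (\<Sum>j<k. w j a * cnj (w j b)) + u a * cnj (u b)" for a b
      using w[rule_format, of a b] unfolding u by (simp add: diff_eq_eq)
    moreover have "(\<Sum>j<k. (w(k := u)) j a * cnj ((w(k := u)) j b)) = (\<Sum>j<k. w j a * cnj (w j b))" for a b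
      by (rule sum.cong) auto
    ultimately have "A a b = (\<Sum>j<Suc k. (w(k := u)) j a * cnj ((w(k := u)) j b))" for a b
      by simp
    then show ?thesis by (intro exI allI)
  qed
qed

lemma psd_gram_decomposition:
  fixes A :: "'a::finite qop"
  assumes "psd A"
  shows "\<exists>(k::nat) w. \<forall>a b. A a b = (\<Sum>j<k. w j a * cnj (w j b))"
  using psd_gram_decomposition_on[OF finite_UNIV assms] by simp


section \<open>The operator norm\<close>

lemma vnorm_eq_L2_set: "vnorm v = L2_set (\<lambda>i. cmod (v i)) UNIV"
  unfolding vnorm_def L2_set_def by simp

lemma vnorm_nonneg: "0 \<le> vnorm v"
  unfolding vnorm_eq_L2_set by simp

lemma vnorm_eq_0_iff: "vnorm v = 0 \<longleftrightarrow> v = (\<lambda>i. 0)"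
  unfolding vnorm_eq_L2_set by (simp add: L2_set_eq_0_iff fun_eq_iff)

lemma vnorm_scale: "vnorm (\<lambda>i. of_real r * v i) = \<bar>r\<bar> * vnorm v"
  unfolding vnorm_eq_L2_set by (simp add: norm_mult L2_set_right_distrib)

lemma cinner_Cauchy_Schwarz: "cmod (cinner v w) \<le> vnorm v * vnorm w"
proof -
  have "cmod (cinner v w) \<le> (\<Sum>i\<in>UNIV. cmod (cnj (v i) * w i))"
    unfolding cinner_def by (rule norm_sum)
  also have "\<dots> = (\<Sum>i\<in>UNIV. \<bar>cmod (v i)\<bar> * \<bar>cmod (w i)\<bar>)"
    by (simp add: norm_mult)
  also have "\<dots> \<le> vnorm v * vnorm w"
    unfolding vnorm_eq_L2_set by (rule L2_set_mult_ineq)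
  finally show ?thesis .
qed

lemma app_scale: "app A (\<lambda>i. c * v i) = (\<lambda>i. c * app A v i)"
  unfolding app_def by (simp add: sum_distrib_left mult_ac)

lemma bdd_above_op_norm_set:
  fixes A :: "'a::finite qop"
  shows "bdd_above {vnorm (app A v) | v. vnorm v = 1}"
proof (rule bdd_aboveI)
  fix y assume "y \<in> {vnorm (app A v) | v. vnorm v = 1}"
  then obtain v where y: "y = vnorm (app A v)" and v: "vnorm v = 1" by blast
  have entry_le_1: "cmod (v j) \<le> 1" for j
    using member_le_L2_set[of UNIV j "\<lambda>i. cmod (v i)"] v unfolding vnorm_eq_L2_set by simp
  have "y \<le> (\<Sum>i\<in>UNIV. \<bar>cmod (app A v i)\<bar>)"
    unfolding y vnorm_eq_L2_set by (rule L2_set_le_sum_abs)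
  also have "\<dots> \<le> (\<Sum>i\<in>UNIV. \<Sum>j\<in>UNIV. cmod (A i j))"
  proof (rule sum_mono)
    fix i
    have "\<bar>cmod (app A v i)\<bar> \<le> (\<Sum>j\<in>UNIV. cmod (A i j * v j))"
      unfolding app_def by (simp add: norm_sum)
    also have "\<dots> \<le> (\<Sum>j\<in>UNIV. cmod (A i j))"
      by (rule sum_mono) (simp add: norm_mult mult_left_le entry_le_1)
    finally show "\<bar>cmod (app A v i)\<bar> \<le> (\<Sum>j\<in>UNIV. cmod (A i j))" .
  qed
  finally show "y \<le> (\<Sum>i\<in>UNIV. \<Sum>j\<in>UNIV. cmod (A i j))" .
qed

lemma vnorm_app_le: "vnorm (app A v) \<le> op_norm A * vnorm v"
proof (cases "v = (\<lambda>i. 0)")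
  case True
  then have "app A v = (\<lambda>i. 0)" unfolding app_def by simp
  then show ?thesis using True by (simp add: vnorm_def)
next
  case False
  then have pos: "0 < vnorm v"
    using vnorm_nonneg[of v] vnorm_eq_0_iff[of v] by linarith
  define u where "u = (\<lambda>i. of_real (1 / vnorm v) * v i)"
  have "vnorm u = 1"
    unfolding u_def vnorm_scale using pos by simp
  then have "vnorm (app A u) \<le> op_norm A"
    unfolding op_norm_def by (intro cSup_upper bdd_above_op_norm_set) blast
  moreover have "vnorm (app A u) = vnorm (app A v) / vnorm v"
    unfolding u_def app_scale vnorm_scale using pos by simp
  ultimately show ?thesis
    using pos by (simp add: divide_le_eq mult.commute)
qed

lemma psd_scaled_idop_minus:
  fixes A :: "'a::finite qop"
  assumes "psd A" "op_norm A \<le> r"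
  shows "psd (op_minus (scaled_idop r) A)"
  unfolding psd_def
proof
  fix v :: "'a \<Rightarrow> complex"
  have sq: "(\<Sum>a\<in>UNIV. (cmod (v a))\<^sup>2) = (vnorm v)\<^sup>2"
    unfolding vnorm_def by (simp add: sum_nonneg)
  have "Re (cinner v (app A v)) \<le> cmod (cinner v (app A v))"
    by (rule complex_Re_le_cmod)
  also have "\<dots> \<le> vnorm v * vnorm (app A v)"
    by (rule cinner_Cauchy_Schwarz)
  also have "\<dots> \<le> vnorm v * (op_norm A * vnorm v)"
    by (rule mult_left_mono[OF vnorm_app_le vnorm_nonneg])
  also have "\<dots> \<le> vnorm v * (r * vnorm v)"
    by (intro mult_left_mono mult_right_mono assms(2) vnorm_nonneg)
  finally have "Re (cinner v (app A v)) \<le> r * (vnorm v)\<^sup>2"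
    by (simp add: power2_eq_square mult_ac)
  moreover have "Im (cinner v (app A v)) = 0"
    using assms(1) unfolding psd_def by blast
  ultimately show "Im (cinner v (app (op_minus (scaled_idop r) A) v)) = 0
      \<and> 0 \<le> Re (cinner v (app (op_minus (scaled_idop r) A) v))"
    unfolding cinner_app_op_minus cinner_app_scaled_idop sq by simp
qed


section \<open>Expectations of product observables\<close>

definition tensor_expect :: "('n::finite \<Rightarrow> 'd::finite) qop \<Rightarrow> ('n \<Rightarrow> 'd qop) \<Rightarrow> real" where
  "tensor_expect \<rho> A = Re (trace (op_mult \<rho> (tensor A)))"

lemma tensor_expect_sum:
  fixes F :: "'n::finite \<Rightarrow> 'k \<Rightarrow> 'd::finite qop"
  assumes "\<And>i. finite (K i)"
  shows "tensor_expect \<rho> (\<lambda>i a b. \<Sum>k\<in>K i. F i k a b)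
       = (\<Sum>y\<in>PiE UNIV K. tensor_expect \<rho> (\<lambda>i. F i (y i)))"
proof -
  have "tensor (\<lambda>i a b. \<Sum>k\<in>K i. F i k a b) = (\<lambda>f g. \<Sum>y\<in>PiE UNIV K. tensor (\<lambda>i. F i (y i)) f g)"
    unfolding tensor_def by (intro ext prod_sum_PiE) (simp_all add: assms)
  then show ?thesis
    unfolding tensor_expect_def trace_def op_mult_def
    by (simp add: sum_distrib_left sum.swap[of _ "PiE UNIV K"])
qed

lemma tensor_expect_rank_one_nonneg:
  fixes u :: "'n::finite \<Rightarrow> 'd::finite \<Rightarrow> complex"
  assumes "psd \<rho>"
  shows "0 \<le> tensor_expect \<rho> (\<lambda>i a b. u i a * cnj (u i b))"
proof -
  define U where "U f = (\<Prod>i\<in>UNIV. u i (f i))" for f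
  have "trace (op_mult \<rho> (tensor (\<lambda>i a b. u i a * cnj (u i b)))) = cinner U (app \<rho> U)"
    unfolding trace_def op_mult_def tensor_def cinner_def app_def U_def
    by (simp add: prod.distrib sum_distrib_left mult_ac)
  then show ?thesis
    using assms unfolding psd_def tensor_expect_def by simp
qed

lemma tensor_expect_nonneg:
  assumes "psd \<rho>" "\<And>i. psd (A i)"
  shows "0 \<le> tensor_expect \<rho> A"
proof -
  have "\<forall>i. \<exists>(k::nat) w. \<forall>a b. A i a b = (\<Sum>j<k. w j a * cnj (w j b))"
    using psd_gram_decomposition[OF assms(2)] by blast
  then obtain K :: "'a \<Rightarrow> nat" and W where KW: "\<And>i a b. A i a b = (\<Sum>j<K i. W i j a * cnj (W i j b))"
    by metis
  then have "A = (\<lambda>i a b. \<Sum>j\<in>{..<K i}. W i j a * cnj (W i j b))"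
    by (simp add: fun_eq_iff)
  then have "tensor_expect \<rho> A
      = (\<Sum>y\<in>PiE UNIV (\<lambda>i. {..<K i}). tensor_expect \<rho> (\<lambda>i a b. W i (y i) a * cnj (W i (y i) b)))"
    by (simp add: tensor_expect_sum)
  also have "\<dots> \<ge> 0"
    by (intro sum_nonneg tensor_expect_rank_one_nonneg assms(1))
  finally show ?thesis .
qed

lemma tensor_scaled_idop:
  fixes s :: "'n::finite \<Rightarrow> real"
  shows "tensor (\<lambda>i. scaled_idop (s i) :: 'd::finite qop) = scaled_idop (\<Prod>i\<in>UNIV. s i)"
proof (intro ext)
  fix f g :: "'n \<Rightarrow> 'd"
  have "(\<Prod>i\<in>UNIV. idop (f i) (g i)) = (idop f g :: complex)"
  proof (cases "f = g")
    case False
    then obtain i where "f i \<noteq> g i" by (auto simp: fun_eq_iff)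
    then have "(\<Prod>i\<in>UNIV. idop (f i) (g i)) = (0::complex)"
      by (intro prod_zero) (auto simp: idop_def)
    then show ?thesis using False by (simp add: idop_def)
  qed (simp add: idop_def)
  then show "tensor (\<lambda>i. scaled_idop (s i)) f g = scaled_idop (\<Prod>i\<in>UNIV. s i) f g"
    unfolding tensor_def scaled_idop_def by (simp add: prod.distrib)
qed

lemma tensor_expect_scaled_idop:
  assumes "trace \<rho> = 1"
  shows "tensor_expect \<rho> (\<lambda>i. scaled_idop (s i)) = (\<Prod>i\<in>UNIV. s i)"
proof -
  have "trace (op_mult \<rho> (scaled_idop r)) = of_real r * trace \<rho>" for r
  proof -
    have "(\<Sum>j\<in>UNIV. \<rho> a j * scaled_idop r j a) = of_real r * \<rho> a a" for a
      by (simp add: scaled_idop_def idop_def if_distrib[where f = "\<lambda>z. _ * (_ * z)"] cong: if_cong)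
    then show ?thesis
      unfolding trace_def op_mult_def by (simp add: sum_distrib_left)
  qed
  then show ?thesis
    unfolding tensor_expect_def tensor_scaled_idop using assms by (simp del: of_real_prod)
qed


section \<open>Counting statistics of product measurements\<close>

definition frac_count_prob ::
  "('n::finite \<Rightarrow> 'd::finite) qop \<Rightarrow> ('n \<Rightarrow> 'o::finite \<Rightarrow> 'd qop) \<Rightarrow> 'o set \<Rightarrow> real \<Rightarrow> real" where
  "frac_count_prob \<rho> F S t =
     (\<Sum>y\<in>UNIV. of_bool (t \<le> real (card {i. y i \<in> S}) / real (card (UNIV :: 'n set))) * tensor_expect \<rho> (\<lambda>i. F i (y i)))"

definition two_outcome_povm :: "'a qop \<Rightarrow> bool \<Rightarrow> 'a qop" where
  "two_outcome_povm A b = (if b then A else op_minus idop A)"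

lemma prob_frac_ge_eq_frac_count_prob:
  "prob_frac_ge \<rho> P t = frac_count_prob \<rho> (\<lambda>i. two_outcome_povm (P i)) {True} t"
  unfolding prob_frac_ge_def frac_count_prob_def outcome_prob_def tensor_expect_def two_outcome_povm_def
  by simp

lemma frac_count_prob_mono_set:
  fixes F :: "'n::finite \<Rightarrow> 'o::finite \<Rightarrow> 'd::finite qop"
  assumes "psd \<rho>" "\<And>i k. psd (F i k)" "S \<subseteq> S'"
  shows "frac_count_prob \<rho> F S t \<le> frac_count_prob \<rho> F S' t"
  unfolding frac_count_prob_def
proof (intro sum_mono mult_right_mono)
  fix y :: "'n \<Rightarrow> 'o"
  have "card {i. y i \<in> S} \<le> card {i. y i \<in> S'}"
    using assms(3) by (intro card_mono) auto
  then have "real (card {i. y i \<in> S}) / real (card (UNIV :: 'n set)) \<le> real (card {i. y i \<in> S'}) / real (card (UNIV :: 'n set))"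
    by (intro divide_right_mono) auto
  then show "of_bool (t \<le> real (card {i. y i \<in> S}) / real (card (UNIV :: 'n set)))
      \<le> (of_bool (t \<le> real (card {i. y i \<in> S'}) / real (card (UNIV :: 'n set))) :: real)"
    by auto
  show "0 \<le> tensor_expect \<rho> (\<lambda>i. F i (y i))"
    by (intro tensor_expect_nonneg assms(1,2))
qed

lemma frac_count_prob_union_le:
  fixes F :: "'n::finite \<Rightarrow> 'o::finite \<Rightarrow> 'd::finite qop"
  assumes "psd \<rho>" "\<And>i k. psd (F i k)" "S \<inter> S' = {}"
  shows "frac_count_prob \<rho> F (S \<union> S') (t + t') \<le> frac_count_prob \<rho> F S t + frac_count_prob \<rho> F S' t'"
  unfolding frac_count_prob_def sum.distrib[symmetric] distrib_right[symmetric]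
proof (intro sum_mono mult_right_mono)
  fix y :: "'n \<Rightarrow> 'o"
  have "{i. y i \<in> S \<union> S'} = {i. y i \<in> S} \<union> {i. y i \<in> S'}"
    by auto
  then have "card {i. y i \<in> S \<union> S'} = card {i. y i \<in> S} + card {i. y i \<in> S'}"
    using assms(3) by (simp add: card_Un_disjoint disjoint_iff)
  then have "real (card {i. y i \<in> S \<union> S'}) / real (card (UNIV :: 'n set))
      = real (card {i. y i \<in> S}) / real (card (UNIV :: 'n set)) + real (card {i. y i \<in> S'}) / real (card (UNIV :: 'n set))"
    by (simp add: add_divide_distrib)
  then show "of_bool (t + t' \<le> real (card {i. y i \<in> S \<union> S'}) / real (card (UNIV :: 'n set)))
      \<le> (of_bool (t \<le> real (card {i. y i \<in> S}) / real (card (UNIV :: 'n set)))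
         + of_bool (t' \<le> real (card {i. y i \<in> S'}) / real (card (UNIV :: 'n set))) :: real)"
    by auto
  show "0 \<le> tensor_expect \<rho> (\<lambda>i. F i (y i))"
    by (intro tensor_expect_nonneg assms(1,2))
qed

lemma frac_count_prob_coarse_graining:
  fixes F :: "'n::finite \<Rightarrow> 'o::finite \<Rightarrow> 'd::finite qop" and G :: "'n \<Rightarrow> 'p::finite \<Rightarrow> 'd qop"
  assumes "\<And>i q. G i q = (\<lambda>a b. \<Sum>k\<in>\<pi> -` {q}. F i k a b)"
  shows "frac_count_prob \<rho> F (\<pi> -` S) t = frac_count_prob \<rho> G S t"
proof -
  define w :: "('n \<Rightarrow> 'p) \<Rightarrow> real" where "w z = of_bool (t \<le> real (card {i. z i \<in> S}) / real (card (UNIV :: 'n set)))" for z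
  have fibre: "PiE UNIV (\<lambda>i. \<pi> -` {z i}) = {y\<in>UNIV. \<pi> \<circ> y = z}" for z
    by (auto simp: PiE_UNIV_domain fun_eq_iff)
  have "tensor_expect \<rho> (\<lambda>i. G i (z i)) = (\<Sum>y\<in>PiE UNIV (\<lambda>i. \<pi> -` {z i}). tensor_expect \<rho> (\<lambda>i. F i (y i)))" for z
    unfolding assms by (rule tensor_expect_sum) simp
  then have G_expect: "tensor_expect \<rho> (\<lambda>i. G i (z i)) = (\<Sum>y\<in>{y\<in>UNIV. \<pi> \<circ> y = z}. tensor_expect \<rho> (\<lambda>i. F i (y i)))" for z
    unfolding fibre .
  have "frac_count_prob \<rho> G S t = (\<Sum>z\<in>UNIV. \<Sum>y\<in>{y\<in>UNIV. \<pi> \<circ> y = z}. w (\<pi> \<circ> y) * tensor_expect \<rho> (\<lambda>i. F i (y i)))"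
    unfolding frac_count_prob_def G_expect w_def by (simp add: sum_distrib_left)
  also have "\<dots> = (\<Sum>y\<in>UNIV. w (\<pi> \<circ> y) * tensor_expect \<rho> (\<lambda>i. F i (y i)))"
    by (rule sum.group) auto
  also have "\<dots> = frac_count_prob \<rho> F (\<pi> -` S) t"
    unfolding frac_count_prob_def w_def by simp
  finally show ?thesis ..
qed


lemma prob_frac_ge_eq_frac_count_prob_lumped:
  fixes F :: "'n::finite \<Rightarrow> 'o::finite \<Rightarrow> 'd::finite qop"
  assumes "\<And>i. A i = (\<lambda>a b. \<Sum>k\<in>S. F i k a b)"
    and "\<And>i. op_minus idop (A i) = (\<lambda>a b. \<Sum>k\<in>- S. F i k a b)"
  shows "prob_frac_ge \<rho> A t = frac_count_prob \<rho> F S t"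
proof -
  have "two_outcome_povm (A i) q = (\<lambda>a b. \<Sum>k\<in>(\<lambda>k. k \<in> S) -` {q}. F i k a b)" for i q
    using assms by (cases q) (simp_all add: two_outcome_povm_def vimage_def Collect_neg_eq)
  from frac_count_prob_coarse_graining[of "\<lambda>i. two_outcome_povm (A i)", OF this, of \<rho> "{True}" t]
  show ?thesis
    by (simp add: prob_frac_ge_eq_frac_count_prob vimage_def)
qed

lemma card_bool_funs_card_true:
  "card {y :: 'n::finite \<Rightarrow> bool. card {i. y i} = j} = card (UNIV :: 'n set) choose j"
proof -
  have "bij_betw Collect {y :: 'n \<Rightarrow> bool. card {i. y i} = j} {B. B \<subseteq> UNIV \<and> card B = j}"
    by (rule bij_betwI[where g = "\<lambda>B i. i \<in> B"]) auto
  then have "card {y :: 'n \<Rightarrow> bool. card {i. y i} = j} = card {B. B \<subseteq> (UNIV :: 'n set) \<and> card B = j}"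
    by (rule bij_betw_same_card)
  also have "\<dots> = card (UNIV :: 'n set) choose j"
    by (rule n_subsets) simp
  finally show ?thesis .
qed

lemma sum_bool_funs_by_card_true:
  fixes h :: "nat \<Rightarrow> 'a::comm_semiring_1"
  shows "(\<Sum>y\<in>(UNIV :: ('n::finite \<Rightarrow> bool) set). h (card {i. y i}))
       = (\<Sum>j\<le>card (UNIV :: 'n set). of_nat (card (UNIV :: 'n set) choose j) * h j)"
proof -
  have "(\<lambda>y. card {i. y i}) ` (UNIV :: ('n \<Rightarrow> bool) set) \<subseteq> {..card (UNIV :: 'n set)}"
    by (auto intro: card_mono)
  then have "(\<Sum>y\<in>(UNIV :: ('n \<Rightarrow> bool) set). h (card {i. y i}))
      = (\<Sum>j\<le>card (UNIV :: 'n set). \<Sum>y\<in>{y\<in>(UNIV :: ('n \<Rightarrow> bool) set). card {i. y i} = j}. h (card {i. y i}))"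
    by (rule sum.group[OF finite_UNIV finite_atMost, symmetric])
  also have "\<dots> = (\<Sum>j\<le>card (UNIV :: 'n set). of_nat (card (UNIV :: 'n set) choose j) * h j)"
    by (intro sum.cong refl) (simp add: card_bool_funs_card_true)
  finally show ?thesis .
qed

lemma prob_frac_ge_scaled_idop:
  fixes \<rho> :: "('n::finite \<Rightarrow> 'd::finite) qop"
  assumes "trace \<rho> = 1"
  defines "n \<equiv> card (UNIV :: 'n set)"
  shows "prob_frac_ge \<rho> (\<lambda>i. scaled_idop p) t
       = (\<Sum>j\<in>{j. real n * t \<le> real j \<and> j \<le> n}. real (n choose j) * p ^ j * (1 - p) ^ (n - j))"
proof -
  have "n > 0"
    unfolding n_def by (simp add: card_gt_0_iff)
  have two_outcome: "two_outcome_povm (scaled_idop p :: 'd qop) b = scaled_idop (if b then p else 1 - p)" for b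
    by (auto simp: two_outcome_povm_def op_minus_def scaled_idop_def idop_def fun_eq_iff algebra_simps)
  have power_count: "(\<Prod>i\<in>UNIV. if y i then p else 1 - p) = p ^ card {i. y i} * (1 - p) ^ (n - card {i. y i})"
    for y :: "'n \<Rightarrow> bool"
  proof -
    have "card {i. \<not> y i} = n - card {i. y i}"
      unfolding n_def Collect_neg_eq Compl_eq_Diff_UNIV by (simp add: card_Diff_subset)
    then show ?thesis
      by (simp add: prod.If_cases Int_def)
  qed
  have "prob_frac_ge \<rho> (\<lambda>i. scaled_idop p) t
      = (\<Sum>y\<in>(UNIV :: ('n \<Rightarrow> bool) set). of_bool (t \<le> real (card {i. y i}) / real n) * (p ^ card {i. y i} * (1 - p) ^ (n - card {i. y i})))"
    unfolding prob_frac_ge_eq_frac_count_prob frac_count_prob_def two_outcome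
      tensor_expect_scaled_idop[OF assms(1)] power_count n_def
    by (simp del: sum_of_bool_mult_eq)
  also have "\<dots> = (\<Sum>j\<le>n. real (n choose j) * (of_bool (t \<le> real j / real n) * (p ^ j * (1 - p) ^ (n - j))))"
    unfolding n_def by (rule sum_bool_funs_by_card_true)
  also have "\<dots> = (\<Sum>j\<le>n. of_bool (real n * t \<le> real j) * (real (n choose j) * p ^ j * (1 - p) ^ (n - j)))"
    using \<open>n > 0\<close> by (intro sum.cong refl) (simp add: le_divide_eq mult.commute)
  also have "\<dots> = (\<Sum>j\<in>{j. real n * t \<le> real j \<and> j \<le> n}. real (n choose j) * p ^ j * (1 - p) ^ (n - j))"
    by (simp add: Int_def conj_commute)
  finally show ?thesis .
qed


section \<open>Comparing counting statistics of two-outcome measurements\<close>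

datatype trit = T0 | T1 | T2

lemma UNIV_trit: "(UNIV :: trit set) = {T0, T1, T2}"
  using trit.exhaust by auto

instance trit :: finite
  by standard (simp add: UNIV_trit)

lemma sum_trit:
  fixes f :: "trit \<Rightarrow> 'a::comm_monoid_add"
  shows "(\<Sum>k\<in>A. f k) = (if T0 \<in> A then f T0 else 0) + (if T1 \<in> A then f T1 else 0) + (if T2 \<in> A then f T2 else 0)"
proof -
  have "(\<Sum>k\<in>A. f k) = (\<Sum>k\<in>{T0, T1, T2}. if k \<in> A then f k else 0)"
    by (simp add: sum.If_cases flip: UNIV_trit)
  then show ?thesis
    by (simp add: add.assoc)
qed

lemma prob_frac_ge_mono_povm:
  fixes \<rho> :: "('n::finite \<Rightarrow> 'd::finite) qop"
  assumes "psd \<rho>" "\<And>i. psd (A i)" "\<And>i. op_le (A i) (B i)" "\<And>i. op_le (B i) idop"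
  shows "prob_frac_ge \<rho> A t \<le> prob_frac_ge \<rho> B t"
proof -
  define F where "F i = case_trit (A i) (op_minus (B i) (A i)) (op_minus idop (B i))" for i
  have psd_F: "psd (F i k)" for i k
    using assms(2-4) unfolding op_le_def by (cases k) (simp_all add: F_def)
  have "prob_frac_ge \<rho> A t = frac_count_prob \<rho> F {T0} t"
    by (rule prob_frac_ge_eq_frac_count_prob_lumped) (auto simp: F_def sum_trit op_minus_def fun_eq_iff)
  also have "\<dots> \<le> frac_count_prob \<rho> F {T0, T1} t"
    by (rule frac_count_prob_mono_set[OF assms(1) psd_F]) auto
  also have "\<dots> = prob_frac_ge \<rho> B t"
    by (rule prob_frac_ge_eq_frac_count_prob_lumped[symmetric]) (auto simp: F_def sum_trit op_minus_def fun_eq_iff)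
  finally show ?thesis .
qed

lemma prob_frac_ge_add_le:
  fixes \<rho> :: "('n::finite \<Rightarrow> 'd::finite) qop"
  assumes "psd \<rho>" "\<And>i. psd (A i)" "\<And>i. psd (B i)" "\<And>i. op_le (\<lambda>a b. A i a b + B i a b) idop"
  shows "prob_frac_ge \<rho> (\<lambda>i a b. A i a b + B i a b) (t + t') \<le> prob_frac_ge \<rho> A t + prob_frac_ge \<rho> B t'"
proof -
  define F where "F i = case_trit (A i) (B i) (op_minus idop (\<lambda>a b. A i a b + B i a b))" for i
  have psd_F: "psd (F i k)" for i k
    using assms(2-4) unfolding op_le_def by (cases k) (simp_all add: F_def)
  have "prob_frac_ge \<rho> (\<lambda>i a b. A i a b + B i a b) (t + t') = frac_count_prob \<rho> F ({T0} \<union> {T1}) (t + t')"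
    by (rule prob_frac_ge_eq_frac_count_prob_lumped) (auto simp: F_def sum_trit op_minus_def fun_eq_iff)
  also have "\<dots> \<le> frac_count_prob \<rho> F {T0} t + frac_count_prob \<rho> F {T1} t'"
    by (rule frac_count_prob_union_le[OF assms(1) psd_F]) auto
  also have "frac_count_prob \<rho> F {T0} t = prob_frac_ge \<rho> A t"
    by (rule prob_frac_ge_eq_frac_count_prob_lumped[symmetric]) (auto simp: F_def sum_trit op_minus_def fun_eq_iff)
  also have "frac_count_prob \<rho> F {T1} t' = prob_frac_ge \<rho> B t'"
    by (rule prob_frac_ge_eq_frac_count_prob_lumped[symmetric]) (auto simp: F_def sum_trit op_minus_def fun_eq_iff)
  finally show ?thesis .
qed


theorem lemma10:
  fixes \<rho> :: "('n::finite \<Rightarrow> 'd::finite) qop"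
    and P P' Pt :: "'n \<Rightarrow> 'd qop"
    and e \<delta> c :: real
    and n :: nat
  assumes n_def: "n = card (UNIV :: 'n set)"
    and state: "is_state \<rho>"
    and P_povm: "\<And>i. op_le zeroop (P i) \<and> op_le (P i) idop"
    and P'_povm: "\<And>i. op_le zeroop (P' i) \<and> op_le (P' i) idop"
    and Pt_bnd: "\<And>i. op_le zeroop (Pt i) \<and> op_le (Pt i) idop"
    and P_le: "\<And>i. op_le (P i) (Pt i)"
    and P'_le: "\<And>i. op_le (P' i) (Pt i)"
    and close: "\<And>i. op_norm (op_minus (Pt i) (P i)) \<le> \<delta>"
    and delta_le1: "\<delta> \<le> 1"
  shows "prob_frac_ge \<rho> P' (e + \<delta> + c)
         \<le> prob_frac_ge \<rho> P e
           + (\<Sum>i\<in>{i::nat. real n * (\<delta> + c) \<le> real i \<and> i \<le> n}.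
                real (n choose i) * \<delta> ^ i * (1 - \<delta>) ^ (n - i))"
proof -
  have "psd \<rho>" "trace \<rho> = 1"
    using state unfolding is_state_def by auto
  define Q where "Q i = op_minus (Pt i) (P i)" for i
  have psd_Q: "psd (Q i)" for i
    using P_le unfolding Q_def op_le_def .
  have Q_le: "op_le (Q i) (scaled_idop \<delta>)" for i
    unfolding op_le_def by (rule psd_scaled_idop_minus[OF psd_Q close[folded Q_def]])
  have "op_le (scaled_idop \<delta>) (idop :: 'd qop)"
    using psd_scaled_idop[of "1 - \<delta>"] delta_le1
    by (simp add: op_le_def op_minus_def scaled_idop_def idop_def fun_eq_iff algebra_simps)
  have "prob_frac_ge \<rho> P' (e + \<delta> + c) \<le> prob_frac_ge \<rho> Pt (e + (\<delta> + c))"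
    using prob_frac_ge_mono_povm[OF \<open>psd \<rho>\<close>] P'_povm P'_le Pt_bnd
    by (simp add: op_le_zeroop_iff_psd add.assoc)
  also have "\<dots> \<le> prob_frac_ge \<rho> P e + prob_frac_ge \<rho> Q (\<delta> + c)"
    using prob_frac_ge_add_le[OF \<open>psd \<rho>\<close>, of P Q] P_povm psd_Q Pt_bnd
    by (simp add: Q_def op_minus_def op_le_zeroop_iff_psd)
  also have "\<dots> \<le> prob_frac_ge \<rho> P e + prob_frac_ge \<rho> (\<lambda>i. scaled_idop \<delta>) (\<delta> + c)"
    using prob_frac_ge_mono_povm[OF \<open>psd \<rho>\<close> psd_Q Q_le \<open>op_le (scaled_idop \<delta>) idop\<close>] by simp
  finally show ?thesis
    unfolding prob_frac_ge_scaled_idop[OF \<open>trace \<rho> = 1\<close>] n_def by simp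
qed

end
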